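(* Let $K$ be a field with pairwise commuting derivations $\frac{d}{dx_1},\dots,\frac{d}{dx_k}$ and field of constants $C$. Give $K(\partial_1,\dots,\partial_k)$ the language $\{0,1,+,\cdot,\partial_1,\dots,\partial_k\}$ and $C(t_1,\dots,t_k)$ the language $\{0,1,+,\cdot,t_1,\dots,t_k\}$. Then the $C$-algebra homomorphism $\phi:C(t_1,\dots,t_k)\to K(\partial_1,\dots,\partial_k)$ with $\phi(t_i)=\partial_i$ is an effective Diophantine map.
   Context: The field of constants is $C=\{f\in K\mid \frac{d}{dx_1}f=\dots=\frac{d}{dx_k}f=0\}$. $K[\partial_1,\dots,\partial_k]$ is the ring of differential polynomials with usual addition and multiplication determined by $\partial_i\partial_j=\partial_j\partial_i$ and $\partial_ia=a\partial_i+\frac{d}{dx_i}(a)$ for $a\in K$; it satisfies the left Ore condition and $K(\partial_1,\dots,\partial_k)$ denotes its left division ring of fractions. For a set $R$ with language $\mathcal{L}$ (constants, functions, relations incl. $0$ and $=$), $S\subset R^m$ is Diophantine if $S=\{\vec x\mid\exists\vec y\ (f_1\wedge\dots\wedge f_r)\}$ with basic formulas $f_i$ of the form $(t_1,\dots,t_l)\in S'$, $S'$ a relation or equality and $t_j$ terms of $\mathcal{L}$. A map $d:R_1\to R_2$ is Diophantine if coordinatewise images of Diophantine sets are Diophantine; it is effective if a Diophantine definition of $d(S)$ can be algorithmically computed from one of $S$. *)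

theory Defs
  imports Main "HOL-Library.Nat_Bijection"
begin

text \<open>k pairwise commuting derivations der 0, ..., der (k-1) on a field of type 'k.
  (Index i stands for d/dx_(i+1).)\<close>
definition commuting_derivations :: "nat \<Rightarrow> (nat \<Rightarrow> 'k::field \<Rightarrow> 'k) \<Rightarrow> bool" where
  "commuting_derivations k der \<longleftrightarrow>
     (\<forall>i<k. \<forall>a b. der i (a + b) = der i a + der i b) \<and>
     (\<forall>i<k. \<forall>a b. der i (a * b) = der i a * b + a * der i b) \<and>
     (\<forall>i<k. \<forall>l<k. \<forall>a. der i (der l a) = der l (der i a))"

definition constants :: "nat \<Rightarrow> (nat \<Rightarrow> 'k::field \<Rightarrow> 'k) \<Rightarrow> 'k set" where
  "constants k der = {a. \<forall>i<k. der i a = 0}"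

definition multi_indices :: "nat \<Rightarrow> (nat \<Rightarrow> nat) set" where
  "multi_indices k = {\<alpha>. \<forall>i\<ge>k. \<alpha> i = 0}"

definition ncmono :: "nat \<Rightarrow> (nat \<Rightarrow> 'a::ring_1) \<Rightarrow> (nat \<Rightarrow> nat) \<Rightarrow> 'a" where
  "ncmono k d \<alpha> = foldr (\<lambda>i acc. d i ^ \<alpha> i * acc) [0..<k] 1"

definition diffop_set :: "nat \<Rightarrow> ('k \<Rightarrow> 'd::ring_1) \<Rightarrow> (nat \<Rightarrow> 'd) \<Rightarrow> 'd set" where
  "diffop_set k j d = {(\<Sum>\<alpha>\<in>A. j (c \<alpha>) * ncmono k d \<alpha>) | A c. finite A \<and> A \<subseteq> multi_indices k}"

text \<open>(D, j, d) is the left division ring of fractions K(d_1,...,d_k) of the ring of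
  differential polynomials K[d_1,...,d_k]: j embeds K as a subring, the d_i commute pairwise
  and satisfy d_i a = a d_i + der_i(a), the monomials d^alpha are left K-linearly independent
  (so the subring generated is K[d_1,...,d_k]), and every element of D is a left fraction
  p^{-1} q of differential polynomials.  These properties determine D up to isomorphism.\<close>
definition is_diffop_fraction_ring ::
  "nat \<Rightarrow> (nat \<Rightarrow> 'k::field \<Rightarrow> 'k) \<Rightarrow> ('k \<Rightarrow> 'd::division_ring) \<Rightarrow> (nat \<Rightarrow> 'd) \<Rightarrow> bool" where
  "is_diffop_fraction_ring k der j d \<longleftrightarrow>
     (\<forall>a b. j (a + b) = j a + j b) \<and> (\<forall>a b. j (a * b) = j a * j b) \<and> j 1 = 1 \<and>
     (\<forall>i<k. \<forall>l<k. d i * d l = d l * d i) \<and>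
     (\<forall>i<k. \<forall>a. d i * j a = j a * d i + j (der i a)) \<and>
     (\<forall>A c. finite A \<longrightarrow> A \<subseteq> multi_indices k \<longrightarrow>
        (\<Sum>\<alpha>\<in>A. j (c \<alpha>) * ncmono k d \<alpha>) = 0 \<longrightarrow> (\<forall>\<alpha>\<in>A. c \<alpha> = 0)) \<and>
     (\<forall>x. \<exists>p\<in>diffop_set k j d. \<exists>q\<in>diffop_set k j d. p \<noteq> 0 \<and> x = inverse p * q)"

definition cpoly_set :: "nat \<Rightarrow> 'k set \<Rightarrow> ('k \<Rightarrow> 'f::field) \<Rightarrow> (nat \<Rightarrow> 'f) \<Rightarrow> 'f set" where
  "cpoly_set k C e t = {(\<Sum>\<alpha>\<in>A. e (c \<alpha>) * (\<Prod>i<k. t i ^ \<alpha> i)) | A c.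
      finite A \<and> A \<subseteq> multi_indices k \<and> (\<forall>\<alpha>\<in>A. c \<alpha> \<in> C)}"

text \<open>(F, e, t) is the field of rational functions C(t_1,...,t_k): e embeds the field C,
  the t_i are algebraically independent over C, and F is the fraction field of C[t].\<close>
definition is_rational_function_field ::
  "nat \<Rightarrow> 'k::field set \<Rightarrow> ('k \<Rightarrow> 'f::field) \<Rightarrow> (nat \<Rightarrow> 'f) \<Rightarrow> bool" where
  "is_rational_function_field k C e t \<longleftrightarrow>
     (\<forall>a\<in>C. \<forall>b\<in>C. e (a + b) = e a + e b \<and> e (a * b) = e a * e b) \<and> e 1 = 1 \<and>
     (\<forall>A c. finite A \<longrightarrow> A \<subseteq> multi_indices k \<longrightarrow> (\<forall>\<alpha>\<in>A. c \<alpha> \<in> C) \<longrightarrow>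
        (\<Sum>\<alpha>\<in>A. e (c \<alpha>) * (\<Prod>i<k. t i ^ \<alpha> i)) = 0 \<longrightarrow> (\<forall>\<alpha>\<in>A. c \<alpha> = 0)) \<and>
     (\<forall>x. \<exists>p\<in>cpoly_set k C e t. \<exists>q\<in>cpoly_set k C e t. q \<noteq> 0 \<and> x = p / q)"

definition is_C_algebra_hom ::
  "nat \<Rightarrow> 'k set \<Rightarrow> ('k \<Rightarrow> 'f::field) \<Rightarrow> (nat \<Rightarrow> 'f) \<Rightarrow> ('k \<Rightarrow> 'd::division_ring) \<Rightarrow> (nat \<Rightarrow> 'd)
     \<Rightarrow> ('f \<Rightarrow> 'd) \<Rightarrow> bool" where
  "is_C_algebra_hom k C e t j d \<phi> \<longleftrightarrow>
     (\<forall>x y. \<phi> (x + y) = \<phi> x + \<phi> y) \<and> (\<forall>x y. \<phi> (x * y) = \<phi> x * \<phi> y) \<and> \<phi> 1 = 1 \<and>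
     (\<forall>c\<in>C. \<phi> (e c) = j c) \<and> (\<forall>i<k. \<phi> (t i) = d i)"

datatype tm = Var nat | Zer | One | Add tm tm | Mul tm tm | Cst nat

fun eval_tm :: "(nat \<Rightarrow> 'a::semiring_1) \<Rightarrow> 'a list \<Rightarrow> tm \<Rightarrow> 'a" where
  "eval_tm cs vs (Var n) = vs ! n"
| "eval_tm cs vs Zer = 0"
| "eval_tm cs vs One = 1"
| "eval_tm cs vs (Add a b) = eval_tm cs vs a + eval_tm cs vs b"
| "eval_tm cs vs (Mul a b) = eval_tm cs vs a * eval_tm cs vs b"
| "eval_tm cs vs (Cst i) = cs i"

fun wf_tm :: "nat \<Rightarrow> nat \<Rightarrow> tm \<Rightarrow> bool" where
  "wf_tm k nv (Var n) = (n < nv)"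
| "wf_tm k nv Zer = True"
| "wf_tm k nv One = True"
| "wf_tm k nv (Add a b) = (wf_tm k nv a \<and> wf_tm k nv b)"
| "wf_tm k nv (Mul a b) = (wf_tm k nv a \<and> wf_tm k nv b)"
| "wf_tm k nv (Cst i) = (i < k)"

text \<open>A Diophantine definition (m, n, eqs): free variables 0..m-1, existentially quantified
  variables m..m+n-1, and a conjunction of equations s = t.\<close>
type_synonym dioph = "nat \<times> nat \<times> (tm \<times> tm) list"

definition wf_dioph :: "nat \<Rightarrow> dioph \<Rightarrow> bool" where
  "wf_dioph k \<delta> = (case \<delta> of (m, n, eqs) \<Rightarrow>
      (\<forall>(s, t)\<in>set eqs. wf_tm k (m + n) s \<and> wf_tm k (m + n) t))"

definition dioph_arity :: "dioph \<Rightarrow> nat" where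
  "dioph_arity \<delta> = fst \<delta>"

text \<open>The subset of R^m (tuples as lists of length m) defined by a Diophantine definition,
  where the constant symbols are interpreted by cs.\<close>
definition dioph_set :: "(nat \<Rightarrow> 'a::semiring_1) \<Rightarrow> dioph \<Rightarrow> 'a list set" where
  "dioph_set cs \<delta> = (case \<delta> of (m, n, eqs) \<Rightarrow>
      {xs. length xs = m \<and> (\<exists>ys. length ys = n \<and>
          (\<forall>(s, t)\<in>set eqs. eval_tm cs (xs @ ys) s = eval_tm cs (xs @ ys) t))})"

definition is_diophantine :: "nat \<Rightarrow> (nat \<Rightarrow> 'a::semiring_1) \<Rightarrow> nat \<Rightarrow> 'a list set \<Rightarrow> bool" where
  "is_diophantine k cs m S \<longleftrightarrow> (\<exists>\<delta>. wf_dioph k \<delta> \<and> dioph_arity \<delta> = m \<and> dioph_set cs \<delta> = S)"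

definition diophantine_map ::
  "nat \<Rightarrow> (nat \<Rightarrow> 'a::semiring_1) \<Rightarrow> (nat \<Rightarrow> 'b::semiring_1) \<Rightarrow> ('a \<Rightarrow> 'b) \<Rightarrow> bool" where
  "diophantine_map k cs1 cs2 f \<longleftrightarrow>
     (\<forall>m S. is_diophantine k cs1 m S \<longrightarrow> is_diophantine k cs2 m (map f ` S))"

datatype recf = Zf | Sf | Pf nat | Cn recf "recf list" | Pr recf recf | Mn recf

inductive rec_eval :: "recf \<Rightarrow> nat list \<Rightarrow> nat \<Rightarrow> bool" where
  zero: "rec_eval Zf xs 0"
| succ: "rec_eval Sf (x # xs) (Suc x)"
| proj: "i < length xs \<Longrightarrow> rec_eval (Pf i) xs (xs ! i)"
| comp: "list_all2 (\<lambda>g y. rec_eval g xs y) gs ys \<Longrightarrow> rec_eval f ys z \<Longrightarrow> rec_eval (Cn f gs) xs z"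
| prim0: "rec_eval f xs z \<Longrightarrow> rec_eval (Pr f g) (0 # xs) z"
| primS: "rec_eval (Pr f g) (n # xs) y \<Longrightarrow> rec_eval g (n # y # xs) z \<Longrightarrow> rec_eval (Pr f g) (Suc n # xs) z"
| mu: "rec_eval f (n # xs) 0 \<Longrightarrow> (\<forall>i<n. \<exists>y. rec_eval f (i # xs) (Suc y)) \<Longrightarrow> rec_eval (Mn f) xs n"

fun enc_tm :: "tm \<Rightarrow> nat" where
  "enc_tm (Var n) = prod_encode (0, n)"
| "enc_tm Zer = prod_encode (1, 0)"
| "enc_tm One = prod_encode (2, 0)"
| "enc_tm (Add a b) = prod_encode (3, prod_encode (enc_tm a, enc_tm b))"
| "enc_tm (Mul a b) = prod_encode (4, prod_encode (enc_tm a, enc_tm b))"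
| "enc_tm (Cst i) = prod_encode (5, i)"

definition enc_dioph :: "dioph \<Rightarrow> nat" where
  "enc_dioph \<delta> = (case \<delta> of (m, n, eqs) \<Rightarrow>
      prod_encode (m, prod_encode (n, list_encode (map (\<lambda>(s, t). prod_encode (enc_tm s, enc_tm t)) eqs))))"

definition effective_diophantine_map ::
  "nat \<Rightarrow> (nat \<Rightarrow> 'a::semiring_1) \<Rightarrow> (nat \<Rightarrow> 'b::semiring_1) \<Rightarrow> ('a \<Rightarrow> 'b) \<Rightarrow> bool" where
  "effective_diophantine_map k cs1 cs2 f \<longleftrightarrow>
     (\<exists>r. \<forall>\<delta>. wf_dioph k \<delta> \<longrightarrow>
        (\<exists>\<delta>'. rec_eval r [enc_dioph \<delta>] (enc_dioph \<delta>') \<and> wf_dioph k \<delta>' \<and>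
               dioph_arity \<delta>' = dioph_arity \<delta> \<and> dioph_set cs2 \<delta>' = map f ` dioph_set cs1 \<delta>))"

end

theory Submission
  imports Defs
begin

text \<open>The map \<open>\<phi>\<close> is injective, and its image is exactly the centralizer of
  \<open>\<partial>\<^sub>1, \<dots>, \<partial>\<^sub>k\<close>. For if \<open>x\<close> commutes with every \<open>\<partial>\<^sub>i\<close>, choose a nonzero
  differential polynomial \<open>p\<close> of minimal support such that \<open>p x\<close> is again a differential
  polynomial, and normalise one coefficient of \<open>p\<close> to \<open>1\<close>. The commutator \<open>[\<partial>\<^sub>i, p]\<close>
  has the same property (as \<open>x\<close> commutes with \<open>\<partial>\<^sub>i\<close>) and strictly smaller support, so it
  vanishes: \<open>p\<close>, and then \<open>p x\<close>, has constant coefficients, and \<open>x = p\<^sup>-\<^sup>1 (p x)\<close> lies in the image of \<open>\<phi>\<close>.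
  Consequently a Diophantine definition of \<open>\<phi>(S)\<close> arises from one of \<open>S\<close> by adding the
  equations \<open>x \<partial>\<^sub>i = \<partial>\<^sub>i x\<close> for all free and bound variables \<open>x\<close>, and this syntactic
  transformation is computed on Goedel numbers by an explicit partial recursive function.\<close>

section \<open>Partial recursive arithmetic and pairing\<close>

lemma rec_eval_Cn1: "rec_eval g xs y \<Longrightarrow> rec_eval f [y] z \<Longrightarrow> rec_eval (Cn f [g]) xs z"
  by (rule rec_eval.comp[where ys = "[y]"]) auto

lemma rec_eval_Cn2:
  "rec_eval g1 xs y1 \<Longrightarrow> rec_eval g2 xs y2 \<Longrightarrow> rec_eval f [y1, y2] z \<Longrightarrow> rec_eval (Cn f [g1, g2]) xs z"
  by (rule rec_eval.comp[where ys = "[y1, y2]"]) auto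

lemma rec_eval_Pf: "i < length xs \<Longrightarrow> xs ! i = y \<Longrightarrow> rec_eval (Pf i) xs y"
  using rec_eval.proj by blast

lemma rec_eval_Sf: "rec_eval Sf [x] (Suc x)"
  by (rule rec_eval.succ)

fun rec_const :: "nat \<Rightarrow> recf" where
  "rec_const 0 = Zf"
| "rec_const (Suc c) = Cn Sf [rec_const c]"

lemma rec_eval_const: "rec_eval (rec_const c) xs c"
  by (induction c) (auto intro: rec_eval.zero rec_eval_Cn1 rec_eval_Sf)

definition rec_add :: recf where
  "rec_add = Pr (Pf 0) (Cn Sf [Pf 1])"

lemma rec_eval_add: "rec_eval rec_add [x, y] (x + y)"
proof (induction x)
  case 0
  then show ?case unfolding rec_add_def by (auto intro!: rec_eval.prim0 rec_eval_Pf)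
next
  case (Suc x)
  then show ?case unfolding rec_add_def
    by (auto intro!: rec_eval.primS rec_eval_Cn1 rec_eval_Pf rec_eval_Sf)
qed

definition rec_pred :: recf where
  "rec_pred = Pr Zf (Pf 0)"

lemma rec_eval_pred: "rec_eval rec_pred [x] (x - 1)"
proof (induction x)
  case 0
  then show ?case unfolding rec_pred_def by (auto intro!: rec_eval.prim0 rec_eval.zero)
next
  case (Suc x)
  then show ?case unfolding rec_pred_def by (auto intro!: rec_eval.primS rec_eval_Pf)
qed

text \<open>Primitive recursion runs over the first argument, so the subtrahend comes first.\<close>
definition rec_monus :: recf where
  "rec_monus = Pr (Pf 0) (Cn rec_pred [Pf 1])"

lemma rec_eval_monus: "rec_eval rec_monus [y, x] (x - y)"
proof (induction y)
  case 0
  then show ?case unfolding rec_monus_def by (auto intro!: rec_eval.prim0 rec_eval_Pf)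
next
  case (Suc y)
  have "rec_eval (Cn rec_pred [Pf 1]) [y, x - y, x] (x - Suc y)"
    by (rule rec_eval_Cn1[OF _ rec_eval_pred[of "x - y", simplified]]) (auto intro: rec_eval_Pf)
  with Suc show ?case unfolding rec_monus_def by (auto intro: rec_eval.primS)
qed

definition rec_triangle :: recf where
  "rec_triangle = Pr Zf (Cn rec_add [Pf 1, Cn Sf [Pf 0]])"

lemma rec_eval_triangle: "rec_eval rec_triangle [n] (triangle n)"
proof (induction n)
  case 0
  then show ?case unfolding rec_triangle_def by (auto intro!: rec_eval.prim0 rec_eval.zero)
next
  case (Suc n)
  have "rec_eval (Cn rec_add [Pf 1, Cn Sf [Pf 0]]) [n, triangle n] (triangle n + Suc n)"
    by (rule rec_eval_Cn2[OF _ _ rec_eval_add]) (auto intro!: rec_eval_Cn1 rec_eval_Pf rec_eval_Sf)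
  with Suc show ?case unfolding rec_triangle_def by (auto intro: rec_eval.primS)
qed

definition rec_prod_encode :: recf where
  "rec_prod_encode = Cn rec_add [Cn rec_triangle [Cn rec_add [Pf 0, Pf 1]], Pf 0]"

lemma rec_eval_prod_encode: "rec_eval rec_prod_encode [a, b] (prod_encode (a, b))"
  unfolding rec_prod_encode_def prod_encode_def
  by (auto intro!: rec_eval_Cn2 rec_eval_Cn1 rec_eval_add rec_eval_triangle rec_eval_Pf)

lemma rec_eval_Cn_prod_encode:
  "rec_eval g1 xs a \<Longrightarrow> rec_eval g2 xs b \<Longrightarrow> rec_eval (Cn rec_prod_encode [g1, g2]) xs (prod_encode (a, b))"
  by (rule rec_eval_Cn2[OF _ _ rec_eval_prod_encode])

lemma mono_triangle: "mono triangle"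
  by (simp add: mono_iff_le_Suc)

text \<open>The diagonal index \<open>a + b\<close> of \<open>z = prod_encode (a, b)\<close> is the least \<open>s\<close> with
  \<open>z < triangle (s + 1)\<close>, i.e. with \<open>Suc z - triangle (Suc s) = 0\<close>.\<close>
definition rec_prod_diag :: recf where
  "rec_prod_diag = Mn (Cn rec_monus [Cn rec_triangle [Cn Sf [Pf 0]], Cn Sf [Pf 1]])"

lemma rec_eval_prod_diag: "rec_eval rec_prod_diag [prod_encode (a, b)] (a + b)"
proof -
  let ?z = "prod_encode (a, b)"
  have step: "rec_eval (Cn rec_monus [Cn rec_triangle [Cn Sf [Pf 0]], Cn Sf [Pf 1]]) [s, z]
      (Suc z - triangle (Suc s))" for s z
    by (auto simp del: triangle_Suc
        intro!: rec_eval_Cn2 rec_eval_Cn1 rec_eval_monus rec_eval_triangle rec_eval_Pf rec_eval_Sf)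
  have "Suc ?z - triangle (Suc (a + b)) = 0"
    by (simp add: prod_encode_def)
  moreover have "\<exists>y. Suc ?z - triangle (Suc s) = Suc y" if "s < a + b" for s
  proof -
    have "triangle (Suc s) \<le> triangle (a + b)"
      using that by (intro monoD[OF mono_triangle]) simp
    then have "triangle (Suc s) \<le> ?z"
      by (simp add: prod_encode_def)
    then show ?thesis
      by (intro exI[of _ "?z - triangle (Suc s)"]) simp
  qed
  ultimately show ?thesis
    unfolding rec_prod_diag_def using step by (intro rec_eval.mu) metis+
qed

definition rec_fst :: recf where
  "rec_fst = Cn rec_monus [Cn rec_triangle [rec_prod_diag], Pf 0]"

lemma rec_eval_fst: "rec_eval rec_fst [prod_encode (a, b)] a"
proof -
  have "rec_eval rec_fst [prod_encode (a, b)] (prod_encode (a, b) - triangle (a + b))"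
    unfolding rec_fst_def
    by (auto intro!: rec_eval_Cn2 rec_eval_Cn1 rec_eval_monus rec_eval_prod_diag rec_eval_triangle rec_eval_Pf)
  then show ?thesis
    by (simp add: prod_encode_def)
qed

definition rec_snd :: recf where
  "rec_snd = Cn rec_monus [rec_fst, rec_prod_diag]"

lemma rec_eval_snd: "rec_eval rec_snd [prod_encode (a, b)] b"
proof -
  have "rec_eval rec_snd [prod_encode (a, b)] (a + b - a)"
    unfolding rec_snd_def by (rule rec_eval_Cn2[OF rec_eval_fst rec_eval_prod_diag rec_eval_monus])
  then show ?thesis
    by simp
qed

section \<open>Adding commutation equations to a Diophantine definition\<close>

definition commute_eq :: "nat \<Rightarrow> nat \<Rightarrow> tm \<times> tm" where
  "commute_eq v i = (Mul (Var v) (Cst i), Mul (Cst i) (Var v))"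

fun commute_eqs :: "nat \<Rightarrow> nat \<Rightarrow> (tm \<times> tm) list" where
  "commute_eqs k 0 = []"
| "commute_eqs k (Suc N) = map (commute_eq N) [0..<k] @ commute_eqs k N"

lemma set_commute_eqs: "set (commute_eqs k N) = {commute_eq v i | v i. v < N \<and> i < k}"
proof (induction N)
  case (Suc N)
  have "{commute_eq v i | v i. v < Suc N \<and> i < k}
      = commute_eq N ` {..<k} \<union> {commute_eq v i | v i. v < N \<and> i < k}"
    by (auto simp: less_Suc_eq)
  with Suc show ?case
    by auto
qed simp

definition add_commute_eqs :: "nat \<Rightarrow> dioph \<Rightarrow> dioph" where
  "add_commute_eqs k \<delta> = (case \<delta> of (m, n, eqs) \<Rightarrow> (m, n, commute_eqs k (m + n) @ eqs))"

lemma wf_dioph_add_commute_eqs: "wf_dioph k \<delta> \<Longrightarrow> wf_dioph k (add_commute_eqs k \<delta>)"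
  by (auto simp: wf_dioph_def add_commute_eqs_def set_commute_eqs commute_eq_def split: prod.splits)

lemma dioph_arity_add_commute_eqs: "dioph_arity (add_commute_eqs k \<delta>) = dioph_arity \<delta>"
  by (simp add: dioph_arity_def add_commute_eqs_def split: prod.splits)

definition eqs_hold :: "(nat \<Rightarrow> 'a::semiring_1) \<Rightarrow> 'a list \<Rightarrow> (tm \<times> tm) list \<Rightarrow> bool" where
  "eqs_hold cs zs eqs \<longleftrightarrow> (\<forall>(s, u)\<in>set eqs. eval_tm cs zs s = eval_tm cs zs u)"

lemma eqs_hold_append: "eqs_hold cs zs (eqs1 @ eqs2) \<longleftrightarrow> eqs_hold cs zs eqs1 \<and> eqs_hold cs zs eqs2"
  by (auto simp: eqs_hold_def)

lemma dioph_set_eq: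
  "dioph_set cs (m, n, eqs) = {xs. length xs = m \<and> (\<exists>ys. length ys = n \<and> eqs_hold cs (xs @ ys) eqs)}"
  by (simp add: dioph_set_def eqs_hold_def)

definition enc_eq :: "tm \<times> tm \<Rightarrow> nat" where
  "enc_eq = (\<lambda>(s, u). prod_encode (enc_tm s, enc_tm u))"

lemma enc_dioph_eq: "enc_dioph (m, n, eqs) = prod_encode (m, prod_encode (n, list_encode (map enc_eq eqs)))"
  by (simp add: enc_dioph_def enc_eq_def)

definition rec_commute_eq :: "nat \<Rightarrow> recf" where
  "rec_commute_eq i =
     (let V = Cn rec_prod_encode [rec_const 0, Pf 0];
          C = rec_const (prod_encode (5, i))
      in Cn rec_prod_encode [Cn rec_prod_encode [rec_const 4, Cn rec_prod_encode [V, C]],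
                             Cn rec_prod_encode [rec_const 4, Cn rec_prod_encode [C, V]]])"

lemma rec_eval_commute_eq: "rec_eval (rec_commute_eq i) (v # xs) (enc_eq (commute_eq v i))"
  unfolding rec_commute_eq_def Let_def enc_eq_def commute_eq_def
  by (auto intro!: rec_eval_Cn_prod_encode rec_eval_const rec_eval_Pf rec_eval.zero)

fun rec_cons_commute_eqs :: "nat list \<Rightarrow> recf" where
  "rec_cons_commute_eqs [] = Pf 1"
| "rec_cons_commute_eqs (i # is) = Cn Sf [Cn rec_prod_encode [rec_commute_eq i, rec_cons_commute_eqs is]]"

lemma rec_eval_cons_commute_eqs:
  "rec_eval (rec_cons_commute_eqs is) (v # list_encode ws # xs)
     (list_encode (map (\<lambda>i. enc_eq (commute_eq v i)) is @ ws))"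
  by (induction "is") (auto intro!: rec_eval_Pf rec_eval_Cn1[OF _ rec_eval_Sf] rec_eval_Cn_prod_encode rec_eval_commute_eq)

definition rec_commute_eqs :: "nat \<Rightarrow> recf" where
  "rec_commute_eqs k = Pr (Pf 0) (rec_cons_commute_eqs [0..<k])"

lemma rec_eval_commute_eqs:
  "rec_eval (rec_commute_eqs k) [N, list_encode ws] (list_encode (map enc_eq (commute_eqs k N) @ ws))"
proof (induction N)
  case 0
  then show ?case unfolding rec_commute_eqs_def by (auto intro!: rec_eval.prim0 rec_eval_Pf)
next
  case (Suc N)
  then show ?case unfolding rec_commute_eqs_def
    by (auto simp: comp_def intro: rec_eval.primS[OF _ rec_eval_cons_commute_eqs])
qed

definition rec_add_commute_eqs :: "nat \<Rightarrow> recf" where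
  "rec_add_commute_eqs k =
     Cn rec_prod_encode [rec_fst, Cn rec_prod_encode [Cn rec_fst [rec_snd],
       Cn (rec_commute_eqs k) [Cn rec_add [rec_fst, Cn rec_fst [rec_snd]], Cn rec_snd [rec_snd]]]]"

lemma rec_eval_add_commute_eqs:
  "rec_eval (rec_add_commute_eqs k) [enc_dioph \<delta>] (enc_dioph (add_commute_eqs k \<delta>))"
proof -
  obtain m n eqs where \<delta>: "\<delta> = (m, n, eqs)"
    by (cases \<delta>) blast
  have "rec_eval (rec_add_commute_eqs k) [enc_dioph \<delta>]
     (prod_encode (m, prod_encode (n, list_encode (map enc_eq (commute_eqs k (m + n)) @ map enc_eq eqs))))"
    unfolding rec_add_commute_eqs_def \<delta> enc_dioph_eq
    by (auto intro!: rec_eval_Cn_prod_encode rec_eval_fst rec_eval_Cn1[OF rec_eval_snd rec_eval_fst]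
        rec_eval_Cn1[OF rec_eval_snd rec_eval_snd] rec_eval_Cn2[OF _ _ rec_eval_commute_eqs]
        rec_eval_Cn2[OF _ _ rec_eval_add])
  then show ?thesis
    by (simp add: \<delta> add_commute_eqs_def enc_dioph_eq)
qed

section \<open>Embeddings onto a centralizer are effectively Diophantine\<close>

locale centralizer_embedding =
  fixes k :: nat and cs1 :: "nat \<Rightarrow> 'a::semiring_1" and cs2 :: "nat \<Rightarrow> 'b::semiring_1"
    and f :: "'a \<Rightarrow> 'b"
  assumes hom_add: "f (x + y) = f x + f y"
    and hom_mult: "f (x * y) = f x * f y"
    and hom_zero: "f 0 = 0"
    and hom_one: "f 1 = 1"
    and hom_consts: "i < k \<Longrightarrow> f (cs1 i) = cs2 i"
    and inj: "inj f"
    and range_eq_centralizer: "range f = {y. \<forall>i<k. y * cs2 i = cs2 i * y}"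
begin

lemma eval_tm_map: "wf_tm k (length zs) s \<Longrightarrow> eval_tm cs2 (map f zs) s = f (eval_tm cs1 zs s)"
  by (induction s) (auto simp: hom_add hom_mult hom_zero hom_one hom_consts)

lemma commute_eqs_hold_iff: "eqs_hold cs2 zs (commute_eqs k (length zs)) \<longleftrightarrow> set zs \<subseteq> range f"
proof -
  have "eqs_hold cs2 zs (commute_eqs k (length zs)) \<longleftrightarrow>
        (\<forall>v<length zs. \<forall>i<k.
           eval_tm cs2 zs (Mul (Var v) (Cst i)) = eval_tm cs2 zs (Mul (Cst i) (Var v)))"
    unfolding eqs_hold_def set_commute_eqs commute_eq_def by blast
  also have "\<dots> \<longleftrightarrow> set zs \<subseteq> range f"
    by (auto simp: range_eq_centralizer in_set_conv_nth subset_iff)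
  finally show ?thesis .
qed

lemma eqs_hold_map_iff:
  assumes "wf_dioph k (m, n, eqs)" "length zs = m + n"
  shows "eqs_hold cs2 (map f zs) eqs \<longleftrightarrow> eqs_hold cs1 zs eqs"
proof -
  have "eval_tm cs2 (map f zs) s = eval_tm cs2 (map f zs) u \<longleftrightarrow> eval_tm cs1 zs s = eval_tm cs1 zs u"
    if "(s, u) \<in> set eqs" for s u
    using assms that by (auto simp: wf_dioph_def eval_tm_map inj_eq[OF inj])
  then show ?thesis
    unfolding eqs_hold_def by fast
qed

lemma dioph_set_add_commute_eqs_subset:
  assumes "wf_dioph k (m, n, eqs)"
  shows "dioph_set cs2 (add_commute_eqs k (m, n, eqs)) \<subseteq> map f ` dioph_set cs1 (m, n, eqs)"
proof
  fix xs
  assume "xs \<in> dioph_set cs2 (add_commute_eqs k (m, n, eqs))"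
  then obtain ys where len: "length xs = m" "length ys = n"
    and comm: "eqs_hold cs2 (xs @ ys) (commute_eqs k (length (xs @ ys)))"
    and eqs: "eqs_hold cs2 (xs @ ys) eqs"
    by (auto simp: add_commute_eqs_def dioph_set_eq eqs_hold_append)
  have "set (xs @ ys) \<subseteq> range f"
    using comm commute_eqs_hold_iff by blast
  then obtain zs where zs: "xs @ ys = map f zs"
    using ex_map_conv[of "xs @ ys" f] by blast
  have "length zs = m + n"
    using len arg_cong[OF zs, of length] by simp
  then have "eqs_hold cs1 zs eqs"
    using eqs eqs_hold_map_iff[OF assms] zs by simp
  with \<open>length zs = m + n\<close> have "take m zs \<in> dioph_set cs1 (m, n, eqs)"
    by (auto simp: dioph_set_eq intro!: exI[of _ "drop m zs"])
  moreover have "xs = map f (take m zs)"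
    using zs len by (metis append_eq_conv_conj take_map)
  ultimately show "xs \<in> map f ` dioph_set cs1 (m, n, eqs)"
    by blast
qed

lemma image_dioph_set_subset:
  assumes "wf_dioph k (m, n, eqs)"
  shows "map f ` dioph_set cs1 (m, n, eqs) \<subseteq> dioph_set cs2 (add_commute_eqs k (m, n, eqs))"
proof
  fix xs
  assume "xs \<in> map f ` dioph_set cs1 (m, n, eqs)"
  then obtain xs0 ys0 where xs: "xs = map f xs0" and len: "length xs0 = m" "length ys0 = n"
    and eqs: "eqs_hold cs1 (xs0 @ ys0) eqs"
    by (auto simp: dioph_set_eq)
  have "length (xs0 @ ys0) = m + n"
    using len by simp
  then have "eqs_hold cs2 (map f (xs0 @ ys0)) eqs"
    using eqs eqs_hold_map_iff[OF assms] by blast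
  moreover have "eqs_hold cs2 (map f (xs0 @ ys0)) (commute_eqs k (length (map f (xs0 @ ys0))))"
    unfolding commute_eqs_hold_iff by auto
  ultimately show "xs \<in> dioph_set cs2 (add_commute_eqs k (m, n, eqs))"
    using xs len by (auto simp: add_commute_eqs_def dioph_set_eq eqs_hold_append intro!: exI[of _ "map f ys0"])
qed

lemma dioph_set_add_commute_eqs:
  "wf_dioph k (m, n, eqs) \<Longrightarrow> dioph_set cs2 (add_commute_eqs k (m, n, eqs)) = map f ` dioph_set cs1 (m, n, eqs)"
  by (intro equalityI dioph_set_add_commute_eqs_subset image_dioph_set_subset)

lemma diophantine_map: "diophantine_map k cs1 cs2 f"
  unfolding diophantine_map_def is_diophantine_def
  by (metis prod_cases3 dioph_set_add_commute_eqs wf_dioph_add_commute_eqs dioph_arity_add_commute_eqs)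

lemma effective_diophantine_map: "effective_diophantine_map k cs1 cs2 f"
  unfolding effective_diophantine_map_def
  by (metis prod_cases3 rec_eval_add_commute_eqs dioph_set_add_commute_eqs wf_dioph_add_commute_eqs
      dioph_arity_add_commute_eqs)

end

section \<open>Differential operators commuting with all derivations\<close>

lemma ncmono_eq_prod_list: "ncmono k d \<alpha> = prod_list (map (\<lambda>i. d i ^ \<alpha> i) [0..<k])"
  by (simp add: ncmono_def prod_list.eq_foldr foldr_map comp_def)

lemma prod_list_commute:
  fixes a :: "'a::monoid_mult"
  assumes "\<forall>x\<in>set xs. a * x = x * a"
  shows "a * prod_list xs = prod_list xs * a"
  using assms by (induction xs) (simp_all, metis mult.assoc)

locale diffop_fraction_field =
  fixes k :: nat and der :: "nat \<Rightarrow> 'k::field \<Rightarrow> 'k"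
    and j :: "'k \<Rightarrow> 'd::division_ring" and d :: "nat \<Rightarrow> 'd"
  assumes der_mult: "i < k \<Longrightarrow> der i (a * b) = der i a * b + a * der i b"
    and j_add: "j (a + b) = j a + j b"
    and j_mult: "j (a * b) = j a * j b"
    and d_commute: "i < k \<Longrightarrow> l < k \<Longrightarrow> d i * d l = d l * d i"
    and d_j: "i < k \<Longrightarrow> d i * j a = j a * d i + j (der i a)"
    and monomials_independent: "finite A \<Longrightarrow> A \<subseteq> multi_indices k \<Longrightarrow>
      (\<Sum>\<alpha>\<in>A. j (c \<alpha>) * ncmono k d \<alpha>) = 0 \<Longrightarrow> \<alpha> \<in> A \<Longrightarrow> c \<alpha> = 0"
    and left_fraction: "\<exists>p\<in>diffop_set k j d. \<exists>q\<in>diffop_set k j d. p \<noteq> 0 \<and> x = inverse p * q"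

lemma diffop_fraction_fieldI:
  "commuting_derivations k der \<Longrightarrow> is_diffop_fraction_ring k der j d \<Longrightarrow> diffop_fraction_field k der j d"
  unfolding commuting_derivations_def is_diffop_fraction_ring_def
  by unfold_locales simp_all

context diffop_fraction_field
begin

abbreviation diffop :: "(nat \<Rightarrow> nat) set \<Rightarrow> ((nat \<Rightarrow> nat) \<Rightarrow> 'k) \<Rightarrow> 'd" where
  "diffop A c \<equiv> \<Sum>\<alpha>\<in>A. j (c \<alpha>) * ncmono k d \<alpha>"

lemma mem_diffop_set: "q \<in> diffop_set k j d \<longleftrightarrow> (\<exists>A c. finite A \<and> A \<subseteq> multi_indices k \<and> q = diffop A c)"
  by (auto simp: diffop_set_def)

lemma j_zero: "j 0 = 0"
  using j_add[of 0 0] by simp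

lemma der_one: "i < k \<Longrightarrow> der i 1 = 0"
proof -
  assume "i < k"
  then have "der i 1 + der i 1 = der i 1"
    using der_mult[of i 1 1] by (simp only: mult_1_left mult_1_right)
  then show ?thesis
    by (metis add_cancel_right_right)
qed

lemma d_commute_ncmono: "i < k \<Longrightarrow> d i * ncmono k d \<alpha> = ncmono k d \<alpha> * d i"
  unfolding ncmono_eq_prod_list
  by (rule prod_list_commute) (auto intro!: power_commuting_commutes[symmetric] d_commute)

lemma commutator_diffop:
  assumes "i < k"
  shows "d i * diffop A c - diffop A c * d i = diffop A (\<lambda>\<alpha>. der i (c \<alpha>))"
proof -
  have "d i * (j a * ncmono k d \<alpha>) - j a * ncmono k d \<alpha> * d i = j (der i a) * ncmono k d \<alpha>" for a \<alpha>
  proof -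
    have "d i * (j a * ncmono k d \<alpha>) = (j a * d i + j (der i a)) * ncmono k d \<alpha>"
      using d_j[OF assms] by (simp flip: mult.assoc)
    also have "\<dots> = j a * ncmono k d \<alpha> * d i + j (der i a) * ncmono k d \<alpha>"
      using d_commute_ncmono[OF assms] by (simp add: distrib_right mult.assoc)
    finally show ?thesis
      by simp
  qed
  then show ?thesis
    by (simp add: sum_distrib_left sum_distrib_right flip: sum_subtractf)
qed

lemma smult_diffop: "j a * diffop A c = diffop A (\<lambda>\<alpha>. a * c \<alpha>)"
  by (simp add: sum_distrib_left j_mult mult.assoc)

lemma diffop_nonzero_support: "finite A \<Longrightarrow> diffop A c = diffop {\<alpha>\<in>A. c \<alpha> \<noteq> 0} c"
  by (rule sum.mono_neutral_right) (auto simp: j_zero)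

lemma diffop_eq_0_iff:
  "finite A \<Longrightarrow> A \<subseteq> multi_indices k \<Longrightarrow> diffop A c = 0 \<longleftrightarrow> (\<forall>\<alpha>\<in>A. c \<alpha> = 0)"
  using monomials_independent by (auto simp: j_zero)

lemma diffop_commute_iff_constant:
  assumes "finite A" "A \<subseteq> multi_indices k"
  shows "(\<forall>i<k. d i * diffop A c = diffop A c * d i) \<longleftrightarrow> (\<forall>\<alpha>\<in>A. c \<alpha> \<in> constants k der)"
proof -
  have "d i * diffop A c = diffop A c * d i \<longleftrightarrow> (\<forall>\<alpha>\<in>A. der i (c \<alpha>) = 0)" if "i < k" for i
  proof -
    have "d i * diffop A c = diffop A c * d i \<longleftrightarrow> diffop A (\<lambda>\<alpha>. der i (c \<alpha>)) = 0"
      by (simp flip: commutator_diffop[OF that])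
    also have "\<dots> \<longleftrightarrow> (\<forall>\<alpha>\<in>A. der i (c \<alpha>) = 0)"
      by (rule diffop_eq_0_iff[OF assms])
    finally show ?thesis .
  qed
  then show ?thesis
    by (auto simp: constants_def)
qed

lemma diffop_mem_diffop_set: "finite A \<Longrightarrow> A \<subseteq> multi_indices k \<Longrightarrow> diffop A c \<in> diffop_set k j d"
  by (auto simp: diffop_set_def)

lemma smult_mem_diffop_set:
  assumes "q \<in> diffop_set k j d"
  shows "j a * q \<in> diffop_set k j d"
proof -
  from assms obtain A c where "finite A" "A \<subseteq> multi_indices k" "q = diffop A c"
    by (auto simp: mem_diffop_set)
  then show ?thesis
    by (simp add: smult_diffop diffop_mem_diffop_set)
qed

lemma commutator_mem_diffop_set:
  assumes "i < k" "q \<in> diffop_set k j d"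
  shows "d i * q - q * d i \<in> diffop_set k j d"
proof -
  from assms obtain A c where "finite A" "A \<subseteq> multi_indices k" "q = diffop A c"
    by (auto simp: mem_diffop_set)
  then show ?thesis
    by (simp add: commutator_diffop[OF assms(1)] diffop_mem_diffop_set)
qed

definition left_denominator :: "(nat \<Rightarrow> nat) set \<Rightarrow> ((nat \<Rightarrow> nat) \<Rightarrow> 'k) \<Rightarrow> 'd \<Rightarrow> bool" where
  "left_denominator A c x \<longleftrightarrow>
     finite A \<and> A \<subseteq> multi_indices k \<and> diffop A c \<noteq> 0 \<and> diffop A c * x \<in> diffop_set k j d"

lemma left_denominator_exists: "\<exists>A c. left_denominator A c x"
proof -
  obtain p q where p: "p \<in> diffop_set k j d" and q: "q \<in> diffop_set k j d"
    and "p \<noteq> 0" "x = inverse p * q"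
    using left_fraction by blast
  then have "p * x = q"
    by (simp flip: mult.assoc)
  obtain A c where "finite A" "A \<subseteq> multi_indices k" "p = diffop A c"
    using p by (auto simp: mem_diffop_set)
  with \<open>p \<noteq> 0\<close> \<open>p * x = q\<close> q have "left_denominator A c x"
    by (simp add: left_denominator_def)
  then show ?thesis
    by blast
qed

lemma minimal_normalized_left_denominator:
  obtains A c \<alpha>0 where "left_denominator A c x" "\<alpha>0 \<in> A" "c \<alpha>0 = 1"
    "\<And>B b. left_denominator B b x \<Longrightarrow> card A \<le> card B"
proof -
  have "\<exists>n A c. left_denominator A c x \<and> card A = n"
    using left_denominator_exists by blast
  from LeastI_ex[OF this] obtain A c where den: "left_denominator A c x"
    and card_A: "card A = (LEAST n. \<exists>A c. left_denominator A c x \<and> card A = n)"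
    by blast
  have minimal: "card A \<le> card B" if "left_denominator B b x" for B b
    unfolding card_A using that by (intro Least_le) blast
  from den have A: "finite A" "A \<subseteq> multi_indices k"
    by (simp_all add: left_denominator_def)
  obtain \<alpha>0 where \<alpha>0: "\<alpha>0 \<in> A" "c \<alpha>0 \<noteq> 0"
    using den diffop_eq_0_iff[OF A] by (auto simp: left_denominator_def)
  define c1 where "c1 = (\<lambda>\<alpha>. inverse (c \<alpha>0) * c \<alpha>)"
  have "c1 \<alpha>0 = 1"
    using \<alpha>0 by (simp add: c1_def)
  then have "diffop A c1 \<noteq> 0"
    using \<alpha>0 diffop_eq_0_iff[OF A] by force
  moreover have "diffop A c1 * x = j (inverse (c \<alpha>0)) * (diffop A c * x)"
    by (simp add: c1_def smult_diffop flip: mult.assoc)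
  ultimately have "left_denominator A c1 x"
    using den A smult_mem_diffop_set by (simp add: left_denominator_def)
  from this \<alpha>0(1) \<open>c1 \<alpha>0 = 1\<close> minimal show ?thesis
    by (rule that)
qed

lemma constant_left_denominator:
  assumes x: "\<forall>i<k. d i * x = x * d i"
  obtains A c where "left_denominator A c x" "\<forall>\<alpha>\<in>A. c \<alpha> \<in> constants k der"
proof -
  obtain A c \<alpha>0 where den: "left_denominator A c x" and \<alpha>0: "\<alpha>0 \<in> A" "c \<alpha>0 = 1"
    and minimal: "\<And>B b. left_denominator B b x \<Longrightarrow> card A \<le> card B"
    using minimal_normalized_left_denominator[where x = x] by blast
  then have A: "finite A" "A \<subseteq> multi_indices k" and cx: "diffop A c * x \<in> diffop_set k j d"
    by (simp_all add: left_denominator_def)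
  have "d i * diffop A c = diffop A c * d i" if i: "i < k" for i
  proof (rule ccontr)
    assume "d i * diffop A c \<noteq> diffop A c * d i"
    define B where "B = {\<alpha>\<in>A. der i (c \<alpha>) \<noteq> 0}"
    have commutator: "d i * diffop A c - diffop A c * d i = diffop B (\<lambda>\<alpha>. der i (c \<alpha>))"
      unfolding commutator_diffop[OF i] B_def by (rule diffop_nonzero_support[OF A(1)])
    have "(d i * diffop A c - diffop A c * d i) * x = d i * (diffop A c * x) - diffop A c * x * d i"
      using x i by (simp add: left_diff_distrib mult.assoc)
    then have "left_denominator B (\<lambda>\<alpha>. der i (c \<alpha>)) x"
      using commutator A \<open>d i * diffop A c \<noteq> diffop A c * d i\<close> commutator_mem_diffop_set[OF i cx]
      by (auto simp: B_def left_denominator_def)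
    then have "card A \<le> card B"
      by (rule minimal)
    moreover have "B \<subset> A"
    proof -
      have "\<alpha>0 \<notin> B"
        using \<alpha>0(2) der_one[OF i] by (simp add: B_def)
      moreover have "B \<subseteq> A"
        by (auto simp: B_def)
      ultimately show ?thesis
        using \<alpha>0(1) by blast
    qed
    ultimately show False
      using A(1) psubset_card_mono by (metis not_le)
  qed
  then have "\<forall>\<alpha>\<in>A. c \<alpha> \<in> constants k der"
    using diffop_commute_iff_constant[OF A] by blast
  with den show ?thesis
    by (rule that)
qed

lemma centralizer_constant_fraction:
  assumes x: "\<forall>i<k. d i * x = x * d i"
  obtains A c B b where "finite A" "A \<subseteq> multi_indices k" "\<forall>\<alpha>\<in>A. c \<alpha> \<in> constants k der"
    "finite B" "B \<subseteq> multi_indices k" "\<forall>\<alpha>\<in>B. b \<alpha> \<in> constants k der"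
    "diffop A c \<noteq> 0" "x = inverse (diffop A c) * diffop B b"
proof -
  obtain A c where den: "left_denominator A c x" and c: "\<forall>\<alpha>\<in>A. c \<alpha> \<in> constants k der"
    using constant_left_denominator[OF x] .
  then have A: "finite A" "A \<subseteq> multi_indices k" "\<forall>\<alpha>\<in>A. c \<alpha> \<in> constants k der"
    and p: "diffop A c \<noteq> 0" "diffop A c * x \<in> diffop_set k j d"
    by (simp_all add: left_denominator_def)
  obtain B b where B: "finite B" "B \<subseteq> multi_indices k" and px: "diffop A c * x = diffop B b"
    using p(2) by (auto simp: mem_diffop_set)
  have "d i * diffop B b = diffop B b * d i" if "i < k" for i
  proof -
    have "d i * diffop A c = diffop A c * d i"
      using A diffop_commute_iff_constant that by blast
    then have "d i * (diffop A c * x) = diffop A c * d i * x"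
      by (simp flip: mult.assoc)
    also have "\<dots> = diffop A c * x * d i"
      using x that by (simp add: mult.assoc)
    finally show ?thesis
      by (simp only: px)
  qed
  then have "\<forall>\<alpha>\<in>B. b \<alpha> \<in> constants k der"
    using diffop_commute_iff_constant[OF B] by blast
  moreover have "x = inverse (diffop A c) * diffop B b"
    using p(1) by (simp flip: px add: mult.assoc[symmetric])
  ultimately show ?thesis
    using that A B p(1) by blast
qed

end

section \<open>The image of the rational function field\<close>

locale rational_diffop_hom = diffop_fraction_field k der j d
  for k :: nat and der :: "nat \<Rightarrow> 'k::field \<Rightarrow> 'k"
    and j :: "'k \<Rightarrow> 'd::division_ring" and d :: "nat \<Rightarrow> 'd" +
  fixes e :: "'k \<Rightarrow> 'f::field" and t :: "nat \<Rightarrow> 'f" and \<phi> :: "'f \<Rightarrow> 'd"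
  assumes phi_add: "\<phi> (x + y) = \<phi> x + \<phi> y"
    and phi_mult: "\<phi> (x * y) = \<phi> x * \<phi> y"
    and phi_one: "\<phi> 1 = 1"
    and phi_e: "c \<in> constants k der \<Longrightarrow> \<phi> (e c) = j c"
    and phi_t: "i < k \<Longrightarrow> \<phi> (t i) = d i"
    and rational_fraction: "\<exists>p\<in>cpoly_set k (constants k der) e t. \<exists>q\<in>cpoly_set k (constants k der) e t.
      q \<noteq> 0 \<and> x = p / q"

lemma rational_diffop_homI:
  assumes "commuting_derivations k der" "is_diffop_fraction_ring k der j d"
    and "is_rational_function_field k (constants k der) e t"
    and "is_C_algebra_hom k (constants k der) e t j d \<phi>"
  shows "rational_diffop_hom k der j d e t \<phi>"
proof (rule rational_diffop_hom.intro[OF diffop_fraction_fieldI[OF assms(1,2)]],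
    rule rational_diffop_hom_axioms.intro)
  show "\<exists>p\<in>cpoly_set k (constants k der) e t. \<exists>q\<in>cpoly_set k (constants k der) e t. q \<noteq> 0 \<and> x = p / q"
    for x
    using assms(3) unfolding is_rational_function_field_def by (elim conjE) (rule spec)
qed (use assms(4) in \<open>simp_all add: is_C_algebra_hom_def\<close>)

context rational_diffop_hom
begin

lemma phi_zero: "\<phi> 0 = 0"
  using phi_add[of 0 0] by simp

lemma phi_sum: "\<phi> (sum g A) = (\<Sum>x\<in>A. \<phi> (g x))"
  by (induction A rule: infinite_finite_induct) (simp_all add: phi_zero phi_add)

lemma phi_prod_list: "\<phi> (prod_list xs) = prod_list (map \<phi> xs)"
  by (induction xs) (simp_all add: phi_one phi_mult)

lemma phi_power: "\<phi> (x ^ n) = \<phi> x ^ n"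
  by (induction n) (simp_all add: phi_one phi_mult)

lemma phi_inverse: "\<phi> (inverse x) = inverse (\<phi> x)"
proof (cases "x = 0")
  case True
  then show ?thesis
    by (simp add: phi_zero)
next
  case False
  then have "\<phi> x * \<phi> (inverse x) = 1"
    by (simp flip: phi_mult add: phi_one)
  then show ?thesis
    by (rule inverse_unique[symmetric])
qed

lemma inj_phi: "inj \<phi>"
proof (rule injI)
  fix x y
  assume "\<phi> x = \<phi> y"
  then have "\<phi> (x - y) = 0"
    using phi_add[of "x - y" y] by simp
  then have "\<phi> (inverse (x - y) * (x - y)) = 0"
    by (simp add: phi_mult)
  then show "x = y"
    using phi_one by (cases "x = y") simp_all
qed

lemma phi_monomial: "\<phi> (\<Prod>i<k. t i ^ \<alpha> i) = ncmono k d \<alpha>"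
proof -
  have "(\<Prod>i<k. t i ^ \<alpha> i) = prod_list (map (\<lambda>i. t i ^ \<alpha> i) [0..<k])"
    using prod.distinct_set_conv_list[of "[0..<k]" "\<lambda>i. t i ^ \<alpha> i"] by (simp add: atLeast0LessThan)
  then have "\<phi> (\<Prod>i<k. t i ^ \<alpha> i) = prod_list (map (\<lambda>i. \<phi> (t i) ^ \<alpha> i) [0..<k])"
    by (simp add: phi_prod_list phi_power comp_def)
  also have "\<dots> = prod_list (map (\<lambda>i. d i ^ \<alpha> i) [0..<k])"
    by (intro arg_cong[where f = prod_list] map_cong) (simp_all add: phi_t)
  finally show ?thesis
    by (simp add: ncmono_eq_prod_list)
qed

lemma phi_cpoly:
  "\<forall>\<alpha>\<in>A. c \<alpha> \<in> constants k der \<Longrightarrow> \<phi> (\<Sum>\<alpha>\<in>A. e (c \<alpha>) * (\<Prod>i<k. t i ^ \<alpha> i)) = diffop A c"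
  by (simp add: phi_sum phi_mult phi_e phi_monomial)

lemma d_commute_phi_cpoly:
  assumes "r \<in> cpoly_set k (constants k der) e t" "i < k"
  shows "d i * \<phi> r = \<phi> r * d i"
proof -
  obtain A c where A: "finite A" "A \<subseteq> multi_indices k" and c: "\<forall>\<alpha>\<in>A. c \<alpha> \<in> constants k der"
    and "r = (\<Sum>\<alpha>\<in>A. e (c \<alpha>) * (\<Prod>i<k. t i ^ \<alpha> i))"
    using assms(1) unfolding cpoly_set_def by blast
  then have "\<phi> r = diffop A c"
    by (simp add: phi_cpoly)
  then show ?thesis
    using diffop_commute_iff_constant[OF A, where c = c] c assms(2) by simp
qed

lemma phi_commute_d:
  assumes "i < k"
  shows "\<phi> y * d i = d i * \<phi> y"
proof -
  obtain p q where p: "p \<in> cpoly_set k (constants k der) e t"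
    and q: "q \<in> cpoly_set k (constants k der) e t" and y: "\<phi> y = \<phi> p * inverse (\<phi> q)"
    using rational_fraction by (metis divide_inverse phi_inverse phi_mult)
  have "inverse (\<phi> q) * d i = d i * inverse (\<phi> q)"
    using d_commute_phi_cpoly[OF q assms] by (intro mult_commute_imp_mult_inverse_commute) simp
  then have "\<phi> y * d i = \<phi> p * d i * inverse (\<phi> q)"
    by (simp add: y mult.assoc)
  also have "\<dots> = d i * \<phi> y"
    using d_commute_phi_cpoly[OF p assms] by (simp add: y flip: mult.assoc)
  finally show ?thesis .
qed

lemma centralizer_subset_range_phi:
  assumes "\<forall>i<k. y * d i = d i * y"
  shows "y \<in> range \<phi>"
proof -
  from assms have "\<forall>i<k. d i * y = y * d i"
    by simp
  then obtain A c B b where "finite A" "A \<subseteq> multi_indices k" and c: "\<forall>\<alpha>\<in>A. c \<alpha> \<in> constants k der"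
    and "finite B" "B \<subseteq> multi_indices k" and b: "\<forall>\<alpha>\<in>B. b \<alpha> \<in> constants k der"
    and "diffop A c \<noteq> 0" and y: "y = inverse (diffop A c) * diffop B b"
    by (rule centralizer_constant_fraction)
  define P where "P = (\<Sum>\<alpha>\<in>A. e (c \<alpha>) * (\<Prod>i<k. t i ^ \<alpha> i))"
  define Q where "Q = (\<Sum>\<alpha>\<in>B. e (b \<alpha>) * (\<Prod>i<k. t i ^ \<alpha> i))"
  have P: "\<phi> P = diffop A c" and Q: "\<phi> Q = diffop B b"
    unfolding P_def Q_def using c b by (simp_all add: phi_cpoly)
  have "\<phi> P * \<phi> Q = \<phi> Q * \<phi> P"
    by (simp flip: phi_mult add: mult.commute)
  then have "y = \<phi> (Q / P)"
    using mult_commute_imp_mult_inverse_commute[of "\<phi> P" "\<phi> Q"]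
    by (simp add: y P Q divide_inverse phi_mult phi_inverse)
  then show ?thesis
    by blast
qed

lemma range_phi: "range \<phi> = {y. \<forall>i<k. y * d i = d i * y}"
  using phi_commute_d centralizer_subset_range_phi by blast

end

theorem mainTheorem9:
  fixes k :: nat
    and der :: "nat \<Rightarrow> 'k::field \<Rightarrow> 'k"
    and j :: "'k \<Rightarrow> 'd::division_ring" and d :: "nat \<Rightarrow> 'd"
    and e :: "'k \<Rightarrow> 'f::field" and t :: "nat \<Rightarrow> 'f"
    and \<phi> :: "'f \<Rightarrow> 'd"
  assumes "1 \<le> k"
    and "commuting_derivations k der"
    and "is_diffop_fraction_ring k der j d"
    and "is_rational_function_field k (constants k der) e t"
    and "is_C_algebra_hom k (constants k der) e t j d \<phi>"
  shows "diophantine_map k t d \<phi> \<and> effective_diophantine_map k t d \<phi>"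
proof -
  interpret rational_diffop_hom k der j d e t \<phi>
    using assms(2-5) by (rule rational_diffop_homI)
  interpret centralizer_embedding k t d \<phi>
    by unfold_locales (simp_all add: phi_add phi_mult phi_zero phi_one phi_t inj_phi range_phi)
  show ?thesis
    using diophantine_map effective_diophantine_map ..
qed

end
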